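(* Let $0<r'<r<1$ and let $K\subseteq\mathbb{R}$ be compact. Then there is $c>0$ such that $K\subseteq\theta_{r'}(\mathbb{Z}((T))_{r,\le c})$, where $\theta_{r'}\big(\sum a_nT^n\big)=\sum a_n(r')^n$.
   Context: $\mathbb{Z}((T))_{r,\le c}$ is the set of integer Laurent series $\sum_{n\gg-\infty}a_nT^n$ ($a_n\in\mathbb{Z}$, $a_n=0$ for $n$ sufficiently negative) with $\sum|a_n|r^n\le c$. *)

theory Defs
  imports "HOL-Analysis.Analysis"
begin

text \<open>An integer Laurent series sum a_n T^n is represented by its coefficient
  function a :: int => int, with a_n = 0 for n sufficiently negative.\<close>

definition int_laurent :: "(int \<Rightarrow> int) \<Rightarrow> bool" where
  "int_laurent a \<longleftrightarrow> (\<exists>N. \<forall>n<N. a n = 0)"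

definition ZLaurent_ball :: "real \<Rightarrow> real \<Rightarrow> (int \<Rightarrow> int) set" where
  "ZLaurent_ball r c = {a. int_laurent a \<and>
     (\<lambda>n. real_of_int \<bar>a n\<bar> * r powi n) summable_on UNIV \<and>
     (\<Sum>\<^sub>\<infinity>n. real_of_int \<bar>a n\<bar> * r powi n) \<le> c}"

definition theta :: "real \<Rightarrow> (int \<Rightarrow> int) \<Rightarrow> real" where
  "theta r' a = (\<Sum>\<^sub>\<infinity>n. real_of_int (a n) * r' powi n)"

end

theory Submission
  imports Defs
begin

text \<open>Expand x greedily in base 1/r': the integer part of x is the constant coefficient, and every
  further digit lies in [0, 1/r']. On a compact set K the digits are bounded uniformly, by B say,
  so the weighted norm of the resulting power series is at most B/(1 - r), while its value at r'
  is x. Only r < 1 matters for the norm bound; no comparison of r with r' is needed.\<close>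

definition laurent_of_nat :: "(nat \<Rightarrow> int) \<Rightarrow> int \<Rightarrow> int" where
  "laurent_of_nat d n = (if n < 0 then 0 else d (nat n))"

lemma int_laurent_laurent_of_nat: "int_laurent (laurent_of_nat d)"
  unfolding int_laurent_def laurent_of_nat_def by auto

lemma has_sum_int_of_nonneg_support:
  fixes f :: "int \<Rightarrow> 'a::{comm_monoid_add, topological_space}"
  assumes "\<And>n. n < 0 \<Longrightarrow> f n = 0" and "((\<lambda>k. f (int k)) has_sum s) UNIV"
  shows "(f has_sum s) UNIV"
proof -
  have "(f has_sum s) (range int)"
    using assms(2) by (simp add: has_sum_reindex o_def)
  moreover have "(f has_sum s) UNIV \<longleftrightarrow> (f has_sum s) (range int)"
  proof (rule has_sum_cong_neutral)
    fix n :: int assume "n \<in> UNIV - range int"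
    then show "f n = 0" using assms(1) by (metis Diff_iff nonneg_int_cases not_less rangeI)
  qed auto
  ultimately show ?thesis by simp
qed

lemma has_sum_laurent_of_nat:
  fixes d :: "nat \<Rightarrow> int"
  assumes "0 \<le> q" "q < 1" "\<And>k. \<bar>real_of_int (d k)\<bar> \<le> B"
    and "(\<lambda>k. real_of_int (d k) * q ^ k) sums s"
  shows "((\<lambda>n. real_of_int (laurent_of_nat d n) * q powi n) has_sum s) UNIV"
proof (rule has_sum_int_of_nonneg_support)
  have "summable (\<lambda>k. B * q ^ k)"
    using assms(1,2) by (simp add: summable_geometric)
  moreover have "norm (norm (real_of_int (d k) * q ^ k)) \<le> B * q ^ k" for k
    using assms(1) assms(3)[of k] by (simp add: abs_mult mult_right_mono)
  ultimately have "summable (\<lambda>k. norm (real_of_int (d k) * q ^ k))"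
    by (rule summable_comparison_test')
  then have "((\<lambda>k. real_of_int (d k) * q ^ k) has_sum s) UNIV"
    using assms(4) by (rule norm_summable_imp_has_sum)
  then show "((\<lambda>k. real_of_int (laurent_of_nat d (int k)) * q powi int k) has_sum s) UNIV"
    by (simp add: laurent_of_nat_def)
qed (simp add: laurent_of_nat_def)

lemma laurent_of_nat_in_ZLaurent_ball:
  fixes d :: "nat \<Rightarrow> int"
  assumes "0 \<le> r" "r < 1" "\<And>k. \<bar>real_of_int (d k)\<bar> \<le> B"
  shows "laurent_of_nat d \<in> ZLaurent_ball r (B / (1 - r))"
proof -
  let ?g = "\<lambda>k. real_of_int \<bar>d k\<bar> * r ^ k"
  have geometric: "summable (\<lambda>k. B * r ^ k)"
    using assms(1,2) by (simp add: summable_geometric)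
  have le: "?g k \<le> B * r ^ k" for k
    using assms(1) assms(3)[of k] by (simp add: mult_right_mono)
  have "summable ?g"
    using geometric by (rule summable_comparison_test') (use le assms(1) in simp)
  then have "suminf ?g \<le> (\<Sum>k. B * r ^ k)"
    using geometric le by (intro suminf_le) auto
  also have "\<dots> = B / (1 - r)"
    using assms(1,2) by (simp add: suminf_mult suminf_geometric)
  finally have norm_le: "suminf ?g \<le> B / (1 - r)" .
  have "((\<lambda>n. real_of_int (laurent_of_nat (\<lambda>k. \<bar>d k\<bar>) n) * r powi n) has_sum suminf ?g) UNIV"
    using assms \<open>summable ?g\<close> by (intro has_sum_laurent_of_nat[where B = B])
      (auto simp: summable_sums)
  moreover have "laurent_of_nat (\<lambda>k. \<bar>d k\<bar>) n = \<bar>laurent_of_nat d n\<bar>" for n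
    by (simp add: laurent_of_nat_def)
  ultimately show ?thesis
    using norm_le int_laurent_laurent_of_nat by (auto simp: ZLaurent_ball_def has_sum_iff)
qed

lemma theta_laurent_of_nat:
  fixes d :: "nat \<Rightarrow> int"
  assumes "0 \<le> q" "q < 1" "\<And>k. \<bar>real_of_int (d k)\<bar> \<le> B"
    and "(\<lambda>k. real_of_int (d k) * q ^ k) sums x"
  shows "theta q (laurent_of_nat d) = x"
  unfolding theta_def using has_sum_laurent_of_nat[OF assms] by (rule infsumI)

primrec greedy_rem :: "real \<Rightarrow> real \<Rightarrow> nat \<Rightarrow> real" where
  "greedy_rem q x 0 = frac x"
| "greedy_rem q x (Suc n) = frac (greedy_rem q x n / q)"

definition greedy_digit :: "real \<Rightarrow> real \<Rightarrow> nat \<Rightarrow> int" where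
  "greedy_digit q x k = (case k of 0 \<Rightarrow> \<lfloor>x\<rfloor> | Suc n \<Rightarrow> \<lfloor>greedy_rem q x n / q\<rfloor>)"

lemma greedy_rem_bounds: "0 \<le> greedy_rem q x n" "greedy_rem q x n < 1"
  by (cases n; simp add: frac_lt_1)+

lemma greedy_partial_sum:
  assumes "0 < q"
  shows "(\<Sum>k<Suc n. real_of_int (greedy_digit q x k) * q ^ k) + q ^ n * greedy_rem q x n = x"
proof (induction n)
  case 0
  show ?case by (simp add: greedy_digit_def frac_def)
next
  case (Suc n)
  have "q ^ n * greedy_rem q x n
      = real_of_int (greedy_digit q x (Suc n)) * q ^ Suc n + q ^ Suc n * greedy_rem q x (Suc n)"
    using assms by (simp add: greedy_digit_def frac_def field_simps)
  then show ?case using Suc.IH by simp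
qed

lemma greedy_digit_bound:
  assumes "0 < q"
  shows "\<bar>real_of_int (greedy_digit q x k)\<bar> \<le> \<bar>x\<bar> + 1 + 1 / q"
proof (cases k)
  case 0
  have "0 < 1 / q" using assms by simp
  then have "\<bar>real_of_int \<lfloor>x\<rfloor>\<bar> \<le> \<bar>x\<bar> + 1 + 1 / q" by linarith
  then show ?thesis using 0 by (simp add: greedy_digit_def)
next
  case (Suc n)
  have "0 \<le> greedy_rem q x n / q" "greedy_rem q x n / q \<le> 1 / q"
    using greedy_rem_bounds[of q x n] assms by (simp_all add: divide_right_mono)
  then have "\<bar>real_of_int \<lfloor>greedy_rem q x n / q\<rfloor>\<bar> \<le> 1 / q"
    using of_int_floor_le[of "greedy_rem q x n / q"] by (simp add: abs_of_nonneg) linarith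
  then show ?thesis using Suc by (simp add: greedy_digit_def)
qed

lemma greedy_expansion_sums:
  assumes "0 < q" "q < 1"
  shows "(\<lambda>k. real_of_int (greedy_digit q x k) * q ^ k) sums x"
proof -
  have "(\<lambda>n. q ^ n * greedy_rem q x n) \<longlonglongrightarrow> 0"
  proof (rule Lim_null_comparison)
    show "\<forall>\<^sub>F n in sequentially. norm (q ^ n * greedy_rem q x n) \<le> q ^ n"
      using greedy_rem_bounds[of q x] assms(1)
      by (intro always_eventually allI) (simp add: abs_mult mult_left_le less_imp_le)
    show "(\<lambda>n. q ^ n) \<longlonglongrightarrow> 0" using assms by (intro LIMSEQ_power_zero) simp_all
  qed
  then have "(\<lambda>n. x - q ^ n * greedy_rem q x n) \<longlonglongrightarrow> x"
    using tendsto_diff[of "\<lambda>_. x" x] by fastforce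
  moreover have "(\<Sum>k<Suc n. real_of_int (greedy_digit q x k) * q ^ k) = x - q ^ n * greedy_rem q x n"
    for n using greedy_partial_sum[OF assms(1), where n = n and x = x] by linarith
  ultimately have "(\<lambda>n. \<Sum>k<Suc n. real_of_int (greedy_digit q x k) * q ^ k) \<longlonglongrightarrow> x"
    by (simp only:)
  then show ?thesis unfolding sums_def by (rule LIMSEQ_imp_Suc)
qed

theorem mainTheorem14:
  fixes r r' :: real and K :: "real set"
  assumes "0 < r'" and "r' < r" and "r < 1" and "compact K"
  shows "\<exists>c>0. K \<subseteq> theta r' ` ZLaurent_ball r c"
proof -
  obtain M where "M > 0" and M: "\<And>x. x \<in> K \<Longrightarrow> \<bar>x\<bar> \<le> M"
    using compact_imp_bounded[OF assms(4)] by (auto simp: bounded_pos)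
  define B where "B = M + 1 + 1 / r'"
  have "B / (1 - r) > 0"
    using \<open>M > 0\<close> assms(1,3) by (simp add: B_def add_pos_pos)
  moreover have "x \<in> theta r' ` ZLaurent_ball r (B / (1 - r))" if "x \<in> K" for x
  proof
    have digits: "\<bar>real_of_int (greedy_digit r' x k)\<bar> \<le> B" for k
      using greedy_digit_bound[OF assms(1), of x k] M[OF \<open>x \<in> K\<close>] by (simp add: B_def)
    show "laurent_of_nat (greedy_digit r' x) \<in> ZLaurent_ball r (B / (1 - r))"
      using assms(1-3) digits by (intro laurent_of_nat_in_ZLaurent_ball) auto
    show "x = theta r' (laurent_of_nat (greedy_digit r' x))"
      using assms(1-3) by (intro theta_laurent_of_nat[symmetric, OF _ _ digits] greedy_expansion_sums) auto
  qed
  ultimately show ?thesis by blast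
qed

end
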